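(* For every theory $\Sigma$ and formula $A \Rightarrow B$: $\Sigma \vdash A \Rightarrow B$ if and only if there is a normalized derivation sequence of $A \Rightarrow B$ using formulas in $\Sigma$.
   Context: $Y$ is a non-empty finite set of attributes and $\mathcal{T}_Y = \{y^i \mid y \in Y, i \in \mathbb{Z}\}$; $M + j = \{y^{i+j} \mid y^i \in M\}$. A formula is $A \Rightarrow B$ with $A,B$ finite subsets of $\mathcal{T}_Y$. Deduction rules (for finite $A,B,C,D,E \subseteq \mathcal{T}_Y$, $i \in \mathbb{Z}$): (Ax) infer $A \cup B \Rightarrow A$; (Cut) from $A \Rightarrow B$ and $B \cup C \Rightarrow D$ infer $A \cup C \Rightarrow D$; (Shf) from $A \Rightarrow B$ infer $A+i \Rightarrow B+i$; also (Ref) infer $A \Rightarrow A$; (Acc) from $A \Rightarrow B \cup C$ and $C \Rightarrow D \cup E$ infer $A \Rightarrow B \cup C \cup D$; (Pro) from $A \Rightarrow B \cup C$ infer $A \Rightarrow B$. $\Sigma \vdash A \Rightarrow B$ means there is a finite sequence ending with $A \Rightarrow B$ each member of which is in $\Sigma$ or follows from earlier members by (Ax), (Cut) or (Shf). A normalized derivation sequence of $A \Rightarrow B$ using formulas in $\Sigma$ is a finite sequence of formulas which (1) starts with finitely many formulas in $\Sigma$; (2) continues by formulas obtained by (Shf) applied to formulas in part (1); (3) continues by $A \Rightarrow A$; (4) continues by formulas each obtained by (Acc) whose first hypothesis is the immediately preceding formula and whose second hypothesis is a formula from part (1) or (2); (5) terminates with $A \Rightarrow B$, obtained from the immediately preceding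 formula by (Pro). *)

theory Defs
  imports Main "HOL-Library.FSet"
begin

text \<open>Time-stamped attributes y^i are pairs (y, i); the attribute set Y is the
  (finite, nonempty) universe of the type 'a.  A formula A => B is a pair of
  finite sets (fsets) of time-stamped attributes.\<close>

type_synonym 'a tattr = "'a \<times> int"
type_synonym 'a fml = "'a tattr fset \<times> 'a tattr fset"

definition shift :: "'a tattr fset \<Rightarrow> int \<Rightarrow> 'a tattr fset" where
  "shift M j = (\<lambda>(y, i). (y, i + j)) |`| M"

definition is_Ax :: "'a fml \<Rightarrow> bool" where
  "is_Ax \<psi> \<longleftrightarrow> (\<exists>A B. \<psi> = (A |\<union>| B, A))"

definition is_Cut :: "'a fml \<Rightarrow> 'a fml \<Rightarrow> 'a fml \<Rightarrow> bool" where
  "is_Cut \<phi>1 \<phi>2 \<psi> \<longleftrightarrow>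
     (\<exists>A B C D. \<phi>1 = (A, B) \<and> \<phi>2 = (B |\<union>| C, D) \<and> \<psi> = (A |\<union>| C, D))"

definition is_Shf :: "'a fml \<Rightarrow> 'a fml \<Rightarrow> bool" where
  "is_Shf \<phi> \<psi> \<longleftrightarrow> (\<exists>A B i. \<phi> = (A, B) \<and> \<psi> = (shift A i, shift B i))"

definition is_Ref :: "'a fml \<Rightarrow> bool" where
  "is_Ref \<psi> \<longleftrightarrow> (\<exists>A. \<psi> = (A, A))"

definition is_Acc :: "'a fml \<Rightarrow> 'a fml \<Rightarrow> 'a fml \<Rightarrow> bool" where
  "is_Acc \<phi>1 \<phi>2 \<psi> \<longleftrightarrow>
     (\<exists>A B C D E. \<phi>1 = (A, B |\<union>| C) \<and> \<phi>2 = (C, D |\<union>| E)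
                 \<and> \<psi> = (A, B |\<union>| C |\<union>| D))"

definition is_Pro :: "'a fml \<Rightarrow> 'a fml \<Rightarrow> bool" where
  "is_Pro \<phi> \<psi> \<longleftrightarrow> (\<exists>A B C. \<phi> = (A, B |\<union>| C) \<and> \<psi> = (A, B))"

definition provable :: "'a fml set \<Rightarrow> 'a fml \<Rightarrow> bool" where
  "provable \<Sigma> \<phi> \<longleftrightarrow>
     (\<exists>ds. ds \<noteq> [] \<and> last ds = \<phi> \<and>
        (\<forall>k < length ds. ds ! k \<in> \<Sigma> \<or> is_Ax (ds ! k)
            \<or> (\<exists>i < k. \<exists>j < k. is_Cut (ds ! i) (ds ! j) (ds ! k))
            \<or> (\<exists>i < k. is_Shf (ds ! i) (ds ! k))))"

definition normalized_derivation :: "'a fml set \<Rightarrow> 'a fml \<Rightarrow> 'a fml list \<Rightarrow> bool" where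
  "normalized_derivation \<Sigma> \<phi> ds \<longleftrightarrow>
     (\<exists>P1 P2 P4.
        ds = P1 @ P2 @ [(fst \<phi>, fst \<phi>)] @ P4 @ [\<phi>]
      \<and> set P1 \<subseteq> \<Sigma>
      \<and> (\<forall>k < length P2. \<exists>i < length P1. is_Shf (P1 ! i) (P2 ! k))
      \<and> is_Ref (fst \<phi>, fst \<phi>)
      \<and> (\<forall>k < length P4. \<exists>\<chi> \<in> set P1 \<union> set P2.
            is_Acc (((fst \<phi>, fst \<phi>) # P4) ! k) \<chi> (P4 ! k))
      \<and> is_Pro (last ((fst \<phi>, fst \<phi>) # P4)) \<phi>)"

end

theory Submission
  imports Defs
begin

text \<open>Soundness of normalized derivations amounts to deriving (Ref), (Acc) and (Pro) from (Ax)
  and (Cut).  For completeness, read the shifted instances of \<open>\<Sigma>\<close> as closure rules: \<open>X\<close> is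
  reachable from \<open>A\<close> if it arises from \<open>A\<close> by repeatedly adding \<open>D\<close> for an instance \<open>C \<Rightarrow> D\<close>
  with \<open>C \<subseteq> X\<close>.  By induction on derivations, a derivable \<open>C \<Rightarrow> D\<close> and a shift \<open>i\<close> extend every
  reachable \<open>X \<supseteq> C + i\<close> to a reachable \<open>Y \<supseteq> X \<union> (D + i)\<close>; (Cut) composes two such extensions
  and (Shf) only changes \<open>i\<close>.  Taking \<open>X = A\<close> gives a reachable \<open>Y \<supseteq> B\<close>, and the chain of
  additions leading to \<open>Y\<close>, closed by (Pro), is a normalized derivation.\<close>

inductive derivable :: "'a fml set \<Rightarrow> 'a fml \<Rightarrow> bool" for \<Sigma> where
  mem: "\<phi> \<in> \<Sigma> \<Longrightarrow> derivable \<Sigma> \<phi>"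
| Ax: "is_Ax \<phi> \<Longrightarrow> derivable \<Sigma> \<phi>"
| Cut: "derivable \<Sigma> \<phi>1 \<Longrightarrow> derivable \<Sigma> \<phi>2 \<Longrightarrow> is_Cut \<phi>1 \<phi>2 \<psi> \<Longrightarrow> derivable \<Sigma> \<psi>"
| Shf: "derivable \<Sigma> \<phi> \<Longrightarrow> is_Shf \<phi> \<psi> \<Longrightarrow> derivable \<Sigma> \<psi>"

definition justified :: "'a fml set \<Rightarrow> 'a fml set \<Rightarrow> 'a fml \<Rightarrow> bool" where
  "justified \<Sigma> S \<psi> \<longleftrightarrow>
     \<psi> \<in> \<Sigma> \<or> is_Ax \<psi> \<or> (\<exists>\<phi>1 \<in> S. \<exists>\<phi>2 \<in> S. is_Cut \<phi>1 \<phi>2 \<psi>) \<or> (\<exists>\<phi> \<in> S. is_Shf \<phi> \<psi>)"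

lemma justified_mono: "justified \<Sigma> S \<psi> \<Longrightarrow> S \<subseteq> T \<Longrightarrow> justified \<Sigma> T \<psi>"
  unfolding justified_def by blast

definition derivation_seq :: "'a fml set \<Rightarrow> 'a fml list \<Rightarrow> bool" where
  "derivation_seq \<Sigma> ds \<longleftrightarrow> (\<forall>k < length ds. justified \<Sigma> (set (take k ds)) (ds ! k))"

lemma provable_iff_derivation_seq:
  "provable \<Sigma> \<phi> \<longleftrightarrow> (\<exists>ds. ds \<noteq> [] \<and> last ds = \<phi> \<and> derivation_seq \<Sigma> ds)"
proof -
  have "justified \<Sigma> (set (take k ds)) (ds ! k) \<longleftrightarrow>
          ds ! k \<in> \<Sigma> \<or> is_Ax (ds ! k)
        \<or> (\<exists>i < k. \<exists>j < k. is_Cut (ds ! i) (ds ! j) (ds ! k))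
        \<or> (\<exists>i < k. is_Shf (ds ! i) (ds ! k))"
    if "k < length ds" for k and ds :: "'a fml list"
  proof -
    have "set (take k ds) = (!) ds ` {0..<k}" using that by (simp add: nth_image)
    then show ?thesis unfolding justified_def by auto
  qed
  then show ?thesis unfolding provable_def derivation_seq_def by simp
qed

lemma derivation_seq_append:
  assumes "derivation_seq \<Sigma> ds1" and "derivation_seq \<Sigma> ds2"
  shows "derivation_seq \<Sigma> (ds1 @ ds2)"
  unfolding derivation_seq_def
proof (intro allI impI)
  fix k assume k: "k < length (ds1 @ ds2)"
  show "justified \<Sigma> (set (take k (ds1 @ ds2))) ((ds1 @ ds2) ! k)"
  proof (cases "k < length ds1")
    case True
    then show ?thesis using assms(1) by (simp add: derivation_seq_def nth_append)
  next
    case False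
    then have "justified \<Sigma> (set (take (k - length ds1) ds2)) (ds2 ! (k - length ds1))"
      using assms(2) k by (simp add: derivation_seq_def)
    moreover have "set (take (k - length ds1) ds2) \<subseteq> set (take k (ds1 @ ds2))"
      using False by simp
    ultimately show ?thesis using False by (simp add: nth_append justified_mono)
  qed
qed

lemma derivation_seq_snoc:
  "derivation_seq \<Sigma> ds \<Longrightarrow> justified \<Sigma> (set ds) \<psi> \<Longrightarrow> derivation_seq \<Sigma> (ds @ [\<psi>])"
  unfolding derivation_seq_def by (auto simp: nth_append less_Suc_eq)

lemma derivable_imp_provable:
  assumes "derivable \<Sigma> \<phi>"
  shows "provable \<Sigma> \<phi>"
proof -
  have single: "\<exists>ds. ds \<noteq> [] \<and> last ds = \<psi> \<and> derivation_seq \<Sigma> ds"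
    if "justified \<Sigma> {} \<psi>" for \<psi>
    using derivation_seq_snoc[of \<Sigma> "[]" \<psi>] that by (auto simp: derivation_seq_def)
  have "\<exists>ds. ds \<noteq> [] \<and> last ds = \<phi> \<and> derivation_seq \<Sigma> ds"
    using assms
  proof (induction rule: derivable.induct)
    case (mem \<phi>)
    show ?case by (rule single) (simp add: justified_def mem.hyps)
  next
    case (Ax \<phi>)
    show ?case by (rule single) (simp add: justified_def Ax.hyps)
  next
    case (Cut \<phi>1 \<phi>2 \<psi>)
    then obtain ds1 ds2 where "ds1 \<noteq> []" "last ds1 = \<phi>1" "derivation_seq \<Sigma> ds1"
      and "ds2 \<noteq> []" "last ds2 = \<phi>2" "derivation_seq \<Sigma> ds2" by blast
    then have "derivation_seq \<Sigma> ((ds1 @ ds2) @ [\<psi>])"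
      using Cut.hyps by (intro derivation_seq_snoc derivation_seq_append) (auto simp: justified_def)
    then show ?case by (intro exI[of _ "(ds1 @ ds2) @ [\<psi>]"]) simp
  next
    case (Shf \<phi> \<psi>)
    then obtain ds where "ds \<noteq> []" "last ds = \<phi>" "derivation_seq \<Sigma> ds" by blast
    then have "derivation_seq \<Sigma> (ds @ [\<psi>])"
      using Shf.hyps by (intro derivation_seq_snoc) (auto simp: justified_def)
    then show ?case by (intro exI[of _ "ds @ [\<psi>]"]) simp
  qed
  then show ?thesis by (simp add: provable_iff_derivation_seq)
qed

lemma provable_imp_derivable:
  assumes "provable \<Sigma> \<phi>"
  shows "derivable \<Sigma> \<phi>"
proof -
  obtain ds where ds: "ds \<noteq> []" "last ds = \<phi>" "derivation_seq \<Sigma> ds"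
    using assms by (auto simp: provable_iff_derivation_seq)
  have "derivable \<Sigma> (ds ! k)" if "k < length ds" for k
    using that
  proof (induction k rule: less_induct)
    case (less k)
    have "derivable \<Sigma> \<phi>" if \<phi>: "\<phi> \<in> set (take k ds)" for \<phi>
    proof -
      obtain i where "i < k" "\<phi> = ds ! i"
        using \<phi> less.prems by (auto simp: in_set_conv_nth)
      then show ?thesis using less.IH less.prems by auto
    qed
    moreover have "justified \<Sigma> (set (take k ds)) (ds ! k)"
      using ds(3) less.prems by (simp add: derivation_seq_def)
    ultimately show ?case unfolding justified_def by (blast intro: derivable.intros)
  qed
  then have "derivable \<Sigma> (ds ! (length ds - 1))" using ds(1) by simp
  then show ?thesis using ds by (simp add: last_conv_nth)
qed

lemma provable_iff_derivable: "provable \<Sigma> \<phi> \<longleftrightarrow> derivable \<Sigma> \<phi>"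
  using derivable_imp_provable provable_imp_derivable by blast

lemma is_Pro_iff: "is_Pro \<phi> \<psi> \<longleftrightarrow> fst \<psi> = fst \<phi> \<and> snd \<psi> |\<subseteq>| snd \<phi>"
  unfolding is_Pro_def by (cases \<phi>; cases \<psi>) (auto simp: funion_absorb2)

lemma is_Acc_iff:
  "is_Acc \<phi> \<chi> \<psi> \<longleftrightarrow>
     fst \<psi> = fst \<phi> \<and> fst \<chi> |\<subseteq>| snd \<phi> \<and> snd \<phi> |\<subseteq>| snd \<psi> \<and> snd \<psi> |\<subseteq>| snd \<phi> |\<union>| snd \<chi>"
  (is "_ \<longleftrightarrow> ?rhs")
proof
  assume "is_Acc \<phi> \<chi> \<psi>"
  then show ?rhs unfolding is_Acc_def by auto
next
  assume ?rhs
  then have "\<phi> = (fst \<phi>, snd \<phi> |\<union>| fst \<chi>)" "\<chi> = (fst \<chi>, (snd \<psi> |-| snd \<phi>) |\<union>| snd \<chi>)"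
    "\<psi> = (fst \<phi>, snd \<phi> |\<union>| fst \<chi> |\<union>| (snd \<psi> |-| snd \<phi>))"
    by (auto simp: prod_eq_iff)
  then show "is_Acc \<phi> \<chi> \<psi>" unfolding is_Acc_def by blast
qed

lemma is_CutI: "is_Cut (A, B) (B |\<union>| C, D) (A |\<union>| C, D)"
  unfolding is_Cut_def by blast

lemma derivable_Ref: "derivable \<Sigma> (A, A)"
  by (rule derivable.Ax) (auto simp: is_Ax_def intro: exI[of _ "{||}"])

lemma derivable_trans: "derivable \<Sigma> (A, B) \<Longrightarrow> derivable \<Sigma> (B, D) \<Longrightarrow> derivable \<Sigma> (A, D)"
  using derivable.Cut is_CutI[of A B "{||}" D] by simp

lemma derivable_Pro:
  assumes "derivable \<Sigma> \<phi>" and "is_Pro \<phi> \<psi>"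
  shows "derivable \<Sigma> \<psi>"
proof -
  obtain A X Y where \<phi>: "\<phi> = (A, X)" and \<psi>: "\<psi> = (A, Y)" and "Y |\<subseteq>| X"
    using assms(2) by (cases \<phi>; cases \<psi>) (auto simp: is_Pro_iff)
  then have "is_Ax (X, Y)"
    unfolding is_Ax_def by (rule_tac exI[of _ Y], rule_tac exI[of _ X]) auto
  then show ?thesis
    using derivable_trans[OF assms(1)[unfolded \<phi>] derivable.Ax] \<psi> by simp
qed

lemma derivable_Acc:
  assumes "derivable \<Sigma> \<phi>" and "derivable \<Sigma> \<chi>" and "is_Acc \<phi> \<chi> \<psi>"
  shows "derivable \<Sigma> \<psi>"
proof -
  obtain A X C E Z where \<phi>: "\<phi> = (A, X)" and \<chi>: "\<chi> = (C, E)" and \<psi>: "\<psi> = (A, Z)"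
    and "C |\<subseteq>| X" and "Z |\<subseteq>| E |\<union>| X"
    using assms(3) by (cases \<phi>; cases \<chi>; cases \<psi>) (auto simp: is_Acc_iff)
  then have "is_Cut (C, E) (E |\<union>| X, E |\<union>| X) (X, E |\<union>| X)"
    using is_CutI[of C E X] by (simp add: funion_absorb1)
  then have "derivable \<Sigma> (X, E |\<union>| X)"
    using assms(2) \<chi> derivable_Ref derivable.Cut by blast
  then have "derivable \<Sigma> (A, E |\<union>| X)"
    using assms(1) \<phi> derivable_trans by blast
  then show ?thesis
    using \<psi> \<open>Z |\<subseteq>| E |\<union>| X\<close> derivable_Pro[of \<Sigma> "(A, E |\<union>| X)" "(A, Z)"]
    by (simp add: is_Pro_iff)
qed

fun acc_chain :: "'a fml set \<Rightarrow> 'a fml \<Rightarrow> 'a fml list \<Rightarrow> bool" where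
  "acc_chain S \<phi> [] \<longleftrightarrow> True"
| "acc_chain S \<phi> (\<psi> # P) \<longleftrightarrow> (\<exists>\<chi> \<in> S. is_Acc \<phi> \<chi> \<psi>) \<and> acc_chain S \<psi> P"

lemma acc_chain_iff_nth:
  "acc_chain S \<phi> P \<longleftrightarrow> (\<forall>k < length P. \<exists>\<chi> \<in> S. is_Acc ((\<phi> # P) ! k) \<chi> (P ! k))"
  by (induction P arbitrary: \<phi>) (simp_all add: All_less_Suc2)

lemma acc_chain_mono: "acc_chain S \<phi> P \<Longrightarrow> S \<subseteq> T \<Longrightarrow> acc_chain T \<phi> P"
  by (induction P arbitrary: \<phi>) auto

lemma acc_chain_snoc:
  "acc_chain S \<phi> P \<Longrightarrow> is_Acc (last (\<phi> # P)) \<chi> \<psi> \<Longrightarrow> \<chi> \<in> S \<Longrightarrow> acc_chain S \<phi> (P @ [\<psi>])"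
  by (induction P arbitrary: \<phi>) auto

lemma derivable_last_acc_chain:
  "acc_chain {\<chi>. derivable \<Sigma> \<chi>} \<phi> P \<Longrightarrow> derivable \<Sigma> \<phi> \<Longrightarrow> derivable \<Sigma> (last (\<phi> # P))"
proof (induction P arbitrary: \<phi>)
  case Nil
  then show ?case by simp
next
  case (Cons \<psi> P)
  then obtain \<chi> where "derivable \<Sigma> \<chi>" and "is_Acc \<phi> \<chi> \<psi>" by auto
  then have "derivable \<Sigma> \<psi>" using Cons.prems(2) derivable_Acc by blast
  then show ?case using Cons.IH Cons.prems(1) by simp
qed

lemma shift_union: "shift (X |\<union>| Y) i = shift X i |\<union>| shift Y i"
  unfolding shift_def by auto

lemma shift_shift: "shift (shift X j) i = shift X (j + i)"
  unfolding shift_def by (auto simp: fimage_fimage case_prod_beta add.assoc intro!: fimage_cong)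

lemma shift_0: "shift X 0 = X"
  unfolding shift_def by (simp add: case_prod_beta fset.map_ident_strong)

definition shifted_instances :: "'a fml set \<Rightarrow> 'a fml set" where
  "shifted_instances \<Sigma> = {(shift C i, shift D i) | C D i. (C, D) \<in> \<Sigma>}"

inductive reachable :: "'a fml set \<Rightarrow> 'a tattr fset \<Rightarrow> 'a tattr fset \<Rightarrow> bool" for S A where
  refl: "reachable S A A"
| step: "reachable S A X \<Longrightarrow> \<chi> \<in> S \<Longrightarrow> fst \<chi> |\<subseteq>| X \<Longrightarrow> reachable S A (X |\<union>| snd \<chi>)"

lemma derivable_extends_reachable:
  assumes "derivable \<Sigma> \<phi>" and "reachable (shifted_instances \<Sigma>) A X"
    and "shift (fst \<phi>) i |\<subseteq>| X"
  shows "\<exists>Y. reachable (shifted_instances \<Sigma>) A Y \<and> X |\<union>| shift (snd \<phi>) i |\<subseteq>| Y"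
  using assms
proof (induction arbitrary: X i rule: derivable.induct)
  case (mem \<phi>)
  then have "(shift (fst \<phi>) i, shift (snd \<phi>) i) \<in> shifted_instances \<Sigma>"
    unfolding shifted_instances_def by (cases \<phi>) auto
  then have "reachable (shifted_instances \<Sigma>) A (X |\<union>| shift (snd \<phi>) i)"
    using reachable.step mem.prems by fastforce
  then show ?case by blast
next
  case (Ax \<phi>)
  then show ?case by (auto simp: is_Ax_def shift_union)
next
  case (Cut \<phi>1 \<phi>2 \<psi>)
  then obtain A1 B C D where e: "\<phi>1 = (A1, B)" "\<phi>2 = (B |\<union>| C, D)" "\<psi> = (A1 |\<union>| C, D)"
    unfolding is_Cut_def by blast
  have "shift A1 i |\<subseteq>| X" and "shift C i |\<subseteq>| X"
    using Cut.prems(2) e(3) by (simp_all add: shift_union)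
  then obtain Y1 where Y1: "reachable (shifted_instances \<Sigma>) A Y1" "X |\<union>| shift B i |\<subseteq>| Y1"
    using Cut.IH(1)[OF Cut.prems(1)] e(1) by auto
  with \<open>shift C i |\<subseteq>| X\<close> have "shift (fst \<phi>2) i |\<subseteq>| Y1"
    using e(2) by (auto simp: shift_union)
  then obtain Y2 where "reachable (shifted_instances \<Sigma>) A Y2" "Y1 |\<union>| shift (snd \<phi>2) i |\<subseteq>| Y2"
    using Cut.IH(2)[OF Y1(1)] by blast
  moreover have "X |\<union>| shift (snd \<psi>) i |\<subseteq>| Y1 |\<union>| shift (snd \<phi>2) i"
    using Y1(2) e(2,3) by auto
  ultimately show ?case by blast
next
  case (Shf \<phi> \<psi>)
  then obtain C D j where e: "\<phi> = (C, D)" "\<psi> = (shift C j, shift D j)"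
    unfolding is_Shf_def by blast
  then show ?case using Shf.IH[of X "j + i"] Shf.prems by (simp add: shift_shift)
qed

lemma reachable_imp_acc_chain:
  assumes "reachable (shifted_instances \<Sigma>) A Y"
  shows "\<exists>P1 P2 P4. set P1 \<subseteq> \<Sigma> \<and> (\<forall>\<chi> \<in> set P2. \<exists>\<phi> \<in> set P1. is_Shf \<phi> \<chi>)
           \<and> acc_chain (set P1 \<union> set P2) (A, A) P4 \<and> last ((A, A) # P4) = (A, Y)"
  using assms
proof (induction rule: reachable.induct)
  case refl
  show ?case by (intro exI[of _ "[]"]) simp
next
  case (step X \<chi>)
  then obtain P1 P2 P4 where IH: "set P1 \<subseteq> \<Sigma>" "\<forall>\<chi> \<in> set P2. \<exists>\<phi> \<in> set P1. is_Shf \<phi> \<chi>"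
    "acc_chain (set P1 \<union> set P2) (A, A) P4" "last ((A, A) # P4) = (A, X)" by blast
  obtain C D i where \<chi>: "\<chi> = (shift C i, shift D i)" "(C, D) \<in> \<Sigma>"
    using step.hyps(2) unfolding shifted_instances_def by blast
  let ?P1 = "P1 @ [(C, D)]" and ?P2 = "P2 @ [\<chi>]" and ?P4 = "P4 @ [(A, X |\<union>| snd \<chi>)]"
  have "acc_chain (set ?P1 \<union> set ?P2) (A, A) P4"
    using IH(3) by (rule acc_chain_mono) auto
  moreover have "is_Acc (last ((A, A) # P4)) \<chi> (A, X |\<union>| snd \<chi>)"
    using IH(4) step.hyps(3) by (simp add: is_Acc_iff)
  ultimately have "acc_chain (set ?P1 \<union> set ?P2) (A, A) ?P4"
    by (rule acc_chain_snoc) simp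
  moreover have "set ?P1 \<subseteq> \<Sigma>" using IH(1) \<chi>(2) by simp
  moreover have "is_Shf (C, D) \<chi>" using \<chi>(1) by (auto simp: is_Shf_def)
  then have "\<forall>\<chi>' \<in> set ?P2. \<exists>\<phi> \<in> set ?P1. is_Shf \<phi> \<chi>'" using IH(2) by auto
  moreover have "last ((A, A) # ?P4) = (A, X |\<union>| snd \<chi>)" by simp
  ultimately show ?case by blast
qed

lemma normalized_derivation_iff:
  "normalized_derivation \<Sigma> \<phi> ds \<longleftrightarrow>
     (\<exists>P1 P2 P4. ds = P1 @ P2 @ [(fst \<phi>, fst \<phi>)] @ P4 @ [\<phi>] \<and> set P1 \<subseteq> \<Sigma>
        \<and> (\<forall>\<chi> \<in> set P2. \<exists>\<phi>' \<in> set P1. is_Shf \<phi>' \<chi>)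
        \<and> acc_chain (set P1 \<union> set P2) (fst \<phi>, fst \<phi>) P4
        \<and> is_Pro (last ((fst \<phi>, fst \<phi>) # P4)) \<phi>)"
proof -
  have "(\<forall>k < length P2. \<exists>i < length P1. is_Shf (P1 ! i) (P2 ! k))
    \<longleftrightarrow> (\<forall>\<chi> \<in> set P2. \<exists>\<phi>' \<in> set P1. is_Shf \<phi>' \<chi>)" for P1 P2 :: "'a fml list"
    unfolding all_set_conv_all_nth by (metis in_set_conv_nth nth_mem)
  then show ?thesis
    unfolding normalized_derivation_def acc_chain_iff_nth by (simp add: is_Ref_def)
qed

lemma derivable_imp_normalized_derivation:
  assumes "derivable \<Sigma> (A, B)"
  shows "\<exists>ds. normalized_derivation \<Sigma> (A, B) ds"
proof -
  obtain Y where Y: "reachable (shifted_instances \<Sigma>) A Y" "A |\<union>| B |\<subseteq>| Y"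
    using derivable_extends_reachable[OF assms reachable.refl, of 0] by (auto simp: shift_0)
  obtain P1 P2 P4 where "set P1 \<subseteq> \<Sigma>" "\<forall>\<chi> \<in> set P2. \<exists>\<phi> \<in> set P1. is_Shf \<phi> \<chi>"
    "acc_chain (set P1 \<union> set P2) (A, A) P4" and last: "last ((A, A) # P4) = (A, Y)"
    using reachable_imp_acc_chain[OF Y(1)] by blast
  moreover have "is_Pro (last ((A, A) # P4)) (A, B)"
    using last Y(2) by (simp add: is_Pro_iff)
  ultimately have "normalized_derivation \<Sigma> (A, B) (P1 @ P2 @ [(A, A)] @ P4 @ [(A, B)])"
    unfolding normalized_derivation_iff fst_conv by blast
  then show ?thesis ..
qed

lemma normalized_derivation_imp_derivable:
  assumes "normalized_derivation \<Sigma> (A, B) ds"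
  shows "derivable \<Sigma> (A, B)"
proof -
  obtain P1 P2 P4 where P1: "set P1 \<subseteq> \<Sigma>" and P2: "\<forall>\<chi> \<in> set P2. \<exists>\<phi> \<in> set P1. is_Shf \<phi> \<chi>"
    and P4: "acc_chain (set P1 \<union> set P2) (A, A) P4" and "is_Pro (last ((A, A) # P4)) (A, B)"
    using assms by (auto simp: normalized_derivation_iff)
  moreover have "set P1 \<union> set P2 \<subseteq> {\<chi>. derivable \<Sigma> \<chi>}"
    using P1 P2 derivable.mem derivable.Shf by blast
  then have "derivable \<Sigma> (last ((A, A) # P4))"
    using derivable_last_acc_chain acc_chain_mono[OF P4] derivable_Ref by blast
  ultimately show ?thesis using derivable_Pro by blast
qed

theorem theorem10:
  fixes \<Sigma> :: "('a::finite) fml set" and A B :: "'a tattr fset"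
  shows "provable \<Sigma> (A, B) \<longleftrightarrow> (\<exists>ds. normalized_derivation \<Sigma> (A, B) ds)"
  using provable_iff_derivable derivable_imp_normalized_derivation
    normalized_derivation_imp_derivable by blast

end
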